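(* For a finite graph $G$ define $R_G(t,q)=\sum_{i\ge0}t^i\cdot q\dim H^i(G)$. Then (a) $R_G(t,q)$ depends only on the graph $G$ (not on the chosen ordering of its edges); and (b) $R_G(-1,q)=P_G(1+q)$, where $P_G$ is the chromatic polynomial of $G$.
   Context: Graphs are finite; loops and multiple edges allowed. $P_G(\lambda)$ is the chromatic polynomial (number of proper vertex colorings with $\lambda$ colors). For a graded $\mathbb{Z}$-module $\mathcal{M}=\bigoplus_jM_j$, $q\dim\mathcal{M}=\sum_jq^j\operatorname{rank}(M_j)$, $\operatorname{rank}(M_j)=\dim_{\mathbb{Q}}(M_j\otimes\mathbb{Q})$. For $G=(V,E)$ and $s\subseteq E$, $[G:s]$ is the spanning subgraph with edge set $s$. With $1*1=1$, $1*x=x*1=x$, $x*x=0$: an enhanced state is $S=(s,c)$, $s\subseteq E$, $c$ assigning $1$ or $x$ to each component of $[G:s]$; $i(S)=|s|$, $j(S)=$ number of components colored $x$. $C^{i,j}(G)$ is free abelian on enhanced states with $i(S)=i,j(S)=j$; $C^i(G)=\bigoplus_jC^{i,j}(G)$, graded by $j$. For an ordering of the edges, $d(S)=\sum_{e\in E\setminus s}(-1)^{n(e)}S_e$, $n(e)$ the number of edges of $s$ ordered before $e$; $S_e=(s\cup\{e\},c_e)$ where, if $e$ joins a component to itself, colors are unchanged, and if $e$ joins distinct components $E_1,E_2$ the merged component gets $c(E_1)*c(E_2)$ (and $S_e=0$ if this is $0$). $H^i(G)=\bigoplus_jH^{i,j}(G)$ is the cohomology of this complex, graded by $j$. *)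

theory Defs
  imports Complex_Main "HOL-Library.Function_Algebras" "HOL-Library.FuncSet"
    "HOL-Computational_Algebra.Polynomial"
begin

text \<open>A finite graph (loops and multiple edges allowed): vertex set V, edge set E
  (edges are abstract objects), and an endpoint map ends.\<close>

definition fin_graph :: "'v set \<Rightarrow> 'e set \<Rightarrow> ('e \<Rightarrow> 'v \<times> 'v) \<Rightarrow> bool" where
  "fin_graph V E ends \<longleftrightarrow> finite V \<and> finite E \<and>
     (\<forall>e\<in>E. fst (ends e) \<in> V \<and> snd (ends e) \<in> V)"

definition adj :: "('e \<Rightarrow> 'v \<times> 'v) \<Rightarrow> 'e set \<Rightarrow> 'v \<Rightarrow> 'v \<Rightarrow> bool" where
  "adj ends s u w \<longleftrightarrow> (\<exists>e\<in>s. ends e = (u, w) \<or> ends e = (w, u))"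

definition conn_rel :: "'v set \<Rightarrow> ('e \<Rightarrow> 'v \<times> 'v) \<Rightarrow> 'e set \<Rightarrow> ('v \<times> 'v) set" where
  "conn_rel V ends s = {(u, w). u \<in> V \<and> w \<in> V \<and> (adj ends s)\<^sup>*\<^sup>* u w}"

definition comps :: "'v set \<Rightarrow> ('e \<Rightarrow> 'v \<times> 'v) \<Rightarrow> 'e set \<Rightarrow> 'v set set" where
  "comps V ends s = V // conn_rel V ends s"

definition comp_of :: "'v set \<Rightarrow> ('e \<Rightarrow> 'v \<times> 'v) \<Rightarrow> 'e set \<Rightarrow> 'v \<Rightarrow> 'v set" where
  "comp_of V ends s u = conn_rel V ends s `` {u}"

text \<open>Enhanced states: a pair (s, X) where s \<subseteq> E and X is the set of components of
  [G:s] coloured x (the remaining components are coloured 1).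
  i(S) = card s, j(S) = card X.\<close>
type_synonym ('v, 'e) state = "'e set \<times> 'v set set"

definition states :: "'v set \<Rightarrow> 'e set \<Rightarrow> ('e \<Rightarrow> 'v \<times> 'v) \<Rightarrow> nat \<Rightarrow> nat \<Rightarrow> ('v, 'e) state set" where
  "states V E ends i j = {(s, X). s \<subseteq> E \<and> card s = i \<and> X \<subseteq> comps V ends s \<and> card X = j}"

definition all_states :: "'v set \<Rightarrow> 'e set \<Rightarrow> ('e \<Rightarrow> 'v \<times> 'v) \<Rightarrow> ('v, 'e) state set" where
  "all_states V E ends = {(s, X). s \<subseteq> E \<and> X \<subseteq> comps V ends s}"

text \<open>The state S_e (None encodes S_e = 0), following the rule 1*1=1, 1*x=x*1=x, x*x=0.\<close>
definition next_state :: "'v set \<Rightarrow> ('e \<Rightarrow> 'v \<times> 'v) \<Rightarrow> ('v, 'e) state \<Rightarrow> 'e \<Rightarrow> ('v, 'e) state option" where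
  "next_state V ends S e =
     (let s = fst S; X = snd S;
          C1 = comp_of V ends s (fst (ends e)); C2 = comp_of V ends s (snd (ends e))
      in if C1 = C2 then Some (insert e s, X)
         else if C1 \<in> X \<and> C2 \<in> X then None
         else Some (insert e s,
                    (X - {C1, C2}) \<union> (if C1 \<in> X \<or> C2 \<in> X then {C1 \<union> C2} else {})))"

definition edge_ordering :: "'e set \<Rightarrow> 'e list \<Rightarrow> bool" where
  "edge_ordering E es \<longleftrightarrow> distinct es \<and> set es = E"

definition n_before :: "'e list \<Rightarrow> 'e set \<Rightarrow> 'e \<Rightarrow> nat" where
  "n_before es s e = card {e' \<in> s. e' \<in> set (takeWhile (\<lambda>x. x \<noteq> e) es)}"

definition dcoef :: "'v set \<Rightarrow> 'e set \<Rightarrow> ('e \<Rightarrow> 'v \<times> 'v) \<Rightarrow> 'e list \<Rightarrow>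
    ('v, 'e) state \<Rightarrow> ('v, 'e) state \<Rightarrow> int" where
  "dcoef V E ends es S T =
     (\<Sum>e\<in>E - fst S. if next_state V ends S e = Some T then (-1) ^ n_before es (fst S) e else 0)"

text \<open>Rational chains: finitely supported functions from enhanced states to rat.
  C^{i,j}(G) \<otimes> Q is the subspace supported on states of bidegree (i,j).\<close>
definition chains :: "'v set \<Rightarrow> 'e set \<Rightarrow> ('e \<Rightarrow> 'v \<times> 'v) \<Rightarrow> nat \<Rightarrow> nat \<Rightarrow>
    (('v, 'e) state \<Rightarrow> rat) set" where
  "chains V E ends i j = {f. \<forall>S. f S \<noteq> 0 \<longrightarrow> S \<in> states V E ends i j}"

definition dmap :: "'v set \<Rightarrow> 'e set \<Rightarrow> ('e \<Rightarrow> 'v \<times> 'v) \<Rightarrow> 'e list \<Rightarrow>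
    (('v, 'e) state \<Rightarrow> rat) \<Rightarrow> (('v, 'e) state \<Rightarrow> rat)" where
  "dmap V E ends es f = (\<lambda>T. \<Sum>S\<in>all_states V E ends. f S * of_int (dcoef V E ends es S T))"

definition qscale :: "rat \<Rightarrow> ('a \<Rightarrow> rat) \<Rightarrow> ('a \<Rightarrow> rat)" where
  "qscale c f = (\<lambda>x. c * f x)"

definition qdim :: "('a \<Rightarrow> rat) set \<Rightarrow> nat" where
  "qdim W = vector_space.dim qscale W"

text \<open>rank H^{i,j}(G) = dim_Q (H^{i,j}(G) \<otimes> Q) = dim (ker d on C^{i,j}\<otimes>Q) - dim (image of
  d from C^{i-1,j}\<otimes>Q)  (Q is flat over Z, so homology commutes with \<otimes> Q).\<close>
definition cycles where
  "cycles V E ends es i j = {f \<in> chains V E ends i j. dmap V E ends es f = 0}"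

definition boundaries where
  "boundaries V E ends es i j =
     (if i = 0 then {0} else dmap V E ends es ` chains V E ends (i - 1) j)"

definition hrank :: "'v set \<Rightarrow> 'e set \<Rightarrow> ('e \<Rightarrow> 'v \<times> 'v) \<Rightarrow> 'e list \<Rightarrow> nat \<Rightarrow> nat \<Rightarrow> nat" where
  "hrank V E ends es i j = qdim (cycles V E ends es i j) - qdim (boundaries V E ends es i j)"

text \<open>R_G(t,q) = \<Sum>_i t^i q dim H^i(G); all groups vanish for i > |E| or j > |V|.\<close>
definition R_G :: "'v set \<Rightarrow> 'e set \<Rightarrow> ('e \<Rightarrow> 'v \<times> 'v) \<Rightarrow> 'e list \<Rightarrow> real \<Rightarrow> real \<Rightarrow> real" where
  "R_G V E ends es t q = (\<Sum>i\<in>{0..card E}. \<Sum>j\<in>{0..card V}. t ^ i * q ^ j * real (hrank V E ends es i j))"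

definition proper_colorings :: "'v set \<Rightarrow> 'e set \<Rightarrow> ('e \<Rightarrow> 'v \<times> 'v) \<Rightarrow> nat \<Rightarrow> ('v \<Rightarrow> nat) set" where
  "proper_colorings V E ends n =
     {c \<in> V \<rightarrow>\<^sub>E {..<n}. \<forall>e\<in>E. c (fst (ends e)) \<noteq> c (snd (ends e))}"

definition chromatic_poly :: "'v set \<Rightarrow> 'e set \<Rightarrow> ('e \<Rightarrow> 'v \<times> 'v) \<Rightarrow> int poly" where
  "chromatic_poly V E ends =
     (THE p. \<forall>n. poly p (int n) = int (card (proper_colorings V E ends n)))"

end

theory Submission
  imports Defs
begin

text \<open>
  Adding an edge \<open>e\<close> to an enhanced state \<open>(s, X)\<close> sends every \<open>x\<close>-coloured component
  to the component of \<open>[G : s \<union> {e}]\<close> containing it, and gives \<open>0\<close> as soon as two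
  \<open>x\<close>-coloured components merge. Hence adding two edges in either order leads to the same
  state, with opposite signs, and \<open>d \<circ> d = 0\<close>.

  Changing the edge ordering multiplies the coefficient of \<open>T\<close> in \<open>d S\<close> by
  \<open>\<epsilon>(S) \<epsilon>(T)\<close>, where \<open>\<epsilon>(s) = (-1)^N\<close> and \<open>N\<close> is the number of pairs of edges of \<open>s\<close>
  on which the two orderings disagree. Rescaling every state by \<open>\<epsilon>\<close> is therefore an
  isomorphism of complexes, so the ranks of the cohomology groups do not depend on the ordering.

  For (b), the Euler characteristic of each graded piece is that of the chain groups, so
  \<open>R\<^sub>G(-1, q) = \<Sum>\<^sub>s (-1)^|s| \<Sum>\<^bsub>X \<subseteq> comps s\<^esub> q^|X| = \<Sum>\<^sub>s (-1)^|s| (1 + q)^k(s)\<close>. This is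
  Whitney's expansion \<open>P\<^sub>G(\<lambda>) = \<Sum>\<^sub>s (-1)^|s| \<lambda>^k(s)\<close> at \<open>\<lambda> = 1 + q\<close>, which in turn is
  inclusion-exclusion over the set of edges whose endpoints receive the same colour.
\<close>

section \<open>Linear algebra\<close>

context vector_space
begin

lemma eq_zero_if_in_span_subset_and_complement:
  assumes "independent B" "A \<subseteq> B" "x \<in> span A" "x \<in> span (B - A)"
  shows "x = 0"
proof -
  have "representation B x = representation A x"
    by (rule representation_extend) (use assms in auto)
  moreover have "representation B x = representation (B - A) x"
    by (rule representation_extend) (use assms in auto)
  ultimately have "representation B x = (\<lambda>b. 0)"
    using representation_ne_zero[of A x] representation_ne_zero[of "B - A" x] by fastforce
  moreover have "x \<in> span B"
    using assms span_mono by blast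
  ultimately show ?thesis
    using sum_nonzero_representation_eq[OF assms(1)] by fastforce
qed

lemma rank_nullity:
  assumes W: "subspace W" "W \<subseteq> span A" "finite A"
    and f: "Vector_Spaces.linear scale scale f"
  shows "dim W = dim {x \<in> W. f x = 0} + dim (f ` W)"
proof -
  interpret f: Vector_Spaces.linear scale scale f by fact
  let ?K = "{x \<in> W. f x = 0}"
  obtain K where K: "K \<subseteq> ?K" "independent K" "?K \<subseteq> span K" "card K = dim ?K"
    by (rule basis_exists)
  obtain B where B: "K \<subseteq> B" "B \<subseteq> W" "independent B" "W \<subseteq> span B"
    using maximal_independent_subset_extend[of K W] K by blast
  have "finite B"
    using independent_span_bound[OF W(3) B(3)] B W by auto
  define C where "C = B - K"
  have "x = 0" if "x \<in> span C" "f x = 0" for x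
  proof -
    have "span C \<subseteq> W"
      using span_minimal[of C W] W(1) B(2) by (auto simp: C_def)
    then have "x \<in> span K"
      using K(3) that by auto
    then show ?thesis
      using eq_zero_if_in_span_subset_and_complement[OF B(3,1)] that(1) by (simp add: C_def)
  qed
  then have inj: "inj_on f (span C)"
    using f.inj_on_iff_eq_0[OF subspace_span] by blast
  have "f ` B \<subseteq> insert 0 (f ` C)"
    using K(1) by (auto simp: C_def)
  then have "span (f ` B) \<subseteq> span (f ` C)"
    by (metis span_insert_0 span_mono)
  then have "f ` W \<subseteq> span (f ` C)"
    using f.spans_image[OF B(4)] by blast
  moreover have "independent (f ` C)"
    using f.independent_injective_image[OF independent_mono[OF B(3)] inj] by (simp add: C_def)
  moreover have "card (f ` C) = card C"
    using card_image inj_on_subset[OF inj span_superset] by blast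
  ultimately have "dim (f ` W) = card C"
    using basis_card_eq_dim[of "f ` C" "f ` W"] B(2) by (fastforce simp: C_def)
  moreover have "card C = card B - card K" "card K \<le> card B"
    using \<open>finite B\<close> B(1) by (simp_all add: C_def card_Diff_subset finite_subset card_mono)
  moreover have "card B = dim W"
    using basis_card_eq_dim B by blast
  ultimately show ?thesis
    using K(4) by linarith
qed

lemma dim_subset_of_finite_span:
  assumes "S \<subseteq> T" "T \<subseteq> span A" "finite A"
  shows "dim S \<le> dim T"
proof -
  obtain B where B: "B \<subseteq> T" "independent B" "T \<subseteq> span B" "card B = dim T"
    by (rule basis_exists)
  have "finite B"
    using independent_span_bound[OF assms(3) B(2)] B assms by auto
  then show ?thesis
    using dim_le_card[of S B] B assms by auto
qed

lemma dim_image_eq_if_inj: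
  assumes "Vector_Spaces.linear scale scale f" "inj f"
  shows "dim (f ` W) = dim W"
proof -
  interpret f: Vector_Spaces.linear scale scale f by fact
  obtain B where B: "B \<subseteq> W" "independent B" "W \<subseteq> span B" "card B = dim W"
    by (rule basis_exists)
  have "independent (f ` B)"
    using f.independent_injective_image[OF B(2)] inj_on_subset[OF assms(2)] by auto
  moreover have "f ` W \<subseteq> span (f ` B)"
    using f.spans_image[OF B(3)] .
  ultimately have "dim (f ` W) = card (f ` B)"
    using basis_card_eq_dim B(1) by (metis image_mono)
  also have "\<dots> = dim W"
    using card_image inj_on_subset[OF assms(2)] B(4) by (metis subset_UNIV)
  finally show ?thesis .
qed

end

lemma vector_space_qscale: "vector_space (qscale :: rat \<Rightarrow> ('a \<Rightarrow> rat) \<Rightarrow> _)"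
  unfolding vector_space_def qscale_def by (auto simp: fun_eq_iff algebra_simps)

lemma sum_fun_apply: "(\<Sum>x\<in>A. f x) y = (\<Sum>x\<in>A. f x y)"
  by (induction A rule: infinite_finite_induct) auto

lemma sum_offdiagonal_antisym_eq_zero:
  fixes g :: "'a \<Rightarrow> 'a \<Rightarrow> 'b::linordered_ab_group_add"
  assumes "finite A" "\<And>x y. x \<in> A \<Longrightarrow> y \<in> A \<Longrightarrow> x \<noteq> y \<Longrightarrow> g y x = - g x y"
  shows "(\<Sum>x\<in>A. \<Sum>y\<in>A - {x}. g x y) = 0"
proof -
  have "(\<Sum>x\<in>A. \<Sum>y\<in>A - {x}. g x y) = (\<Sum>x\<in>A. \<Sum>y\<in>{y. y \<in> A \<and> x \<noteq> y}. g x y)"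
    by (intro sum.cong) auto
  also have "\<dots> = (\<Sum>y\<in>A. \<Sum>x\<in>{x. x \<in> A \<and> x \<noteq> y}. g x y)"
    by (rule sum.swap_restrict[OF assms(1) assms(1)])
  also have "\<dots> = - (\<Sum>y\<in>A. \<Sum>x\<in>A - {y}. g y x)"
    using assms(2) by (auto simp: sum_negf[symmetric] intro!: sum.cong)
  finally show ?thesis
    by simp
qed

lemma sum_alternating_telescope:
  fixes b :: "nat \<Rightarrow> 'a::comm_ring_1"
  shows "(\<Sum>i=0..k. (-1) ^ i * (b i + b (Suc i))) = b 0 + (-1) ^ k * b (Suc k)"
  by (induction k) (auto simp: algebra_simps)

lemma sum_power_card_Pow:
  fixes q :: "'a::comm_semiring_1"
  assumes "finite A"
  shows "(\<Sum>X\<in>Pow A. q ^ card X) = (1 + q) ^ card A"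
  using prod_add[OF assms, of "\<lambda>_. q" "\<lambda>_. 1"] by (simp add: add.commute)

lemma prod_of_bool: "finite A \<Longrightarrow> (\<Prod>x\<in>A. of_bool (P x)) = (of_bool (\<forall>x\<in>A. P x) :: 'a::comm_semiring_1)"
  by (induction A rule: finite_induct) auto

lemma of_bool_all_not_eq_sum_Pow:
  assumes "finite A"
  shows "(of_bool (\<forall>x\<in>A. \<not> P x) :: 'a::comm_ring_1) =
    (\<Sum>B\<in>Pow A. (-1) ^ card B * of_bool (\<forall>x\<in>B. P x))"
proof -
  have "(of_bool (\<forall>x\<in>A. \<not> P x) :: 'a) = (\<Prod>x\<in>A. - of_bool (P x) + 1)"
    using prod_of_bool[OF assms, of "\<lambda>x. \<not> P x", where 'a = 'a] by (simp add: of_bool_not_iff)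
  also have "\<dots> = (\<Sum>B\<in>Pow A. (\<Prod>x\<in>B. - of_bool (P x)) * (\<Prod>x\<in>A - B. 1))"
    by (rule prod_add[OF assms])
  also have "\<dots> = (\<Sum>B\<in>Pow A. (-1) ^ card B * of_bool (\<forall>x\<in>B. P x))"
    using assms by (intro sum.cong refl) (simp add: prod_uminus prod_of_bool finite_subset)
  finally show ?thesis .
qed

lemma map_poly_of_int_sum:
  "map_poly (of_int :: int \<Rightarrow> 'a::ring_1) (\<Sum>x\<in>A. p x) = (\<Sum>x\<in>A. map_poly of_int (p x))"
  by (simp add: poly_eq_iff coeff_map_poly coeff_sum)

abbreviation precedes :: "'a list \<Rightarrow> 'a \<Rightarrow> 'a \<Rightarrow> bool" where
  "precedes xs a b \<equiv> a \<in> set (takeWhile (\<lambda>z. z \<noteq> b) xs)"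

lemma precedes_iff_not_precedes:
  "distinct xs \<Longrightarrow> a \<in> set xs \<Longrightarrow> b \<in> set xs \<Longrightarrow> a \<noteq> b \<Longrightarrow>
    precedes xs a b \<longleftrightarrow> \<not> precedes xs b a"
  by (induction xs) auto

lemma not_precedes_self: "\<not> precedes xs a a"
  by (induction xs) auto

lemma n_before_insert:
  assumes "finite s" "e \<notin> s"
  shows "n_before es (insert e s) f = n_before es s f + of_bool (precedes es e f)"
proof -
  have "{e' \<in> insert e s. precedes es e' f} =
      (if precedes es e f then insert e {e' \<in> s. precedes es e' f} else {e' \<in> s. precedes es e' f})"
    by auto
  then show ?thesis
    using assms by (simp add: n_before_def)
qed

lemma n_before_insert_sign_swap:
  assumes "distinct es" "e \<in> set es" "f \<in> set es" "e \<noteq> f" "finite s" "e \<notin> s" "f \<notin> s"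
  shows "(-1::int) ^ n_before es s e * (-1) ^ n_before es (insert e s) f =
    - ((-1) ^ n_before es s f * (-1) ^ n_before es (insert f s) e)"
  using precedes_iff_not_precedes[OF assms(1-4)]
  by (cases "precedes es e f") (simp_all add: n_before_insert assms(5-7))

section \<open>Components of spanning subgraphs\<close>

lemma symp_adj: "symp (adj ends s)"
  unfolding adj_def symp_def by auto

lemma adj_rtranclp_sym: "(adj ends s)\<^sup>*\<^sup>* x y \<Longrightarrow> (adj ends s)\<^sup>*\<^sup>* y x"
  by (rule sympD[OF symp_rtranclp[OF symp_adj]])

lemma adj_rtranclp_mono:
  assumes "s \<subseteq> t" "(adj ends s)\<^sup>*\<^sup>* x y"
  shows "(adj ends t)\<^sup>*\<^sup>* x y"
proof -
  have "adj ends s \<le> adj ends t"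
    using assms(1) unfolding adj_def by blast
  then show ?thesis
    using assms(2) rtranclp_mono by blast
qed

lemma adj_rtranclp_insert:
  assumes "ends e = (u, w)"
  shows "(adj ends (insert e s))\<^sup>*\<^sup>* x y \<longleftrightarrow>
    (adj ends s)\<^sup>*\<^sup>* x y \<or> (adj ends s)\<^sup>*\<^sup>* x u \<and> (adj ends s)\<^sup>*\<^sup>* w y \<or>
    (adj ends s)\<^sup>*\<^sup>* x w \<and> (adj ends s)\<^sup>*\<^sup>* u y"
    (is "?L \<longleftrightarrow> ?R")
proof
  assume ?L
  then show ?R
  proof (induction rule: rtranclp_induct)
    case (step b c)
    then obtain e' where e': "e' \<in> insert e s" "ends e' = (b, c) \<or> ends e' = (c, b)"
      unfolding adj_def by auto
    show ?case
    proof (cases "e' = e")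
      case True
      with e' assms have "b = u \<and> c = w \<or> b = w \<and> c = u"
        by auto
      with step.IH show ?thesis
        by (metis adj_rtranclp_sym rtranclp_trans rtranclp.rtrancl_refl)
    next
      case False
      with e' have "adj ends s b c"
        by (auto simp: adj_def)
      with step.IH show ?thesis
        by (meson rtranclp.rtrancl_into_rtrancl)
    qed
  qed simp
next
  let ?P' = "(adj ends (insert e s))\<^sup>*\<^sup>*"
  have "?P' u w" "?P' w u"
    using assms unfolding adj_def by (auto intro!: r_into_rtranclp)
  moreover assume ?R
  ultimately show ?L
    using adj_rtranclp_mono[of s "insert e s" ends] by (meson rtranclp_trans subset_insertI)
qed

locale finite_graph =
  fixes V :: "'v set" and E :: "'e set" and ends :: "'e \<Rightarrow> 'v \<times> 'v"
  assumes fin_graph: "fin_graph V E ends"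
begin

lemma finite_V: "finite V" and finite_E: "finite E"
  and ends_in_V: "e \<in> E \<Longrightarrow> fst (ends e) \<in> V \<and> snd (ends e) \<in> V"
  using fin_graph unfolding fin_graph_def by auto

abbreviation Comps :: "'e set \<Rightarrow> 'v set set" where
  "Comps s \<equiv> comps V ends s"

abbreviation Comp :: "'e set \<Rightarrow> 'v \<Rightarrow> 'v set" where
  "Comp s \<equiv> comp_of V ends s"

lemma equiv_conn_rel: "equiv V (conn_rel V ends s)"
  unfolding equiv_def refl_on_def sym_def trans_def conn_rel_def
  by (auto intro: adj_rtranclp_sym rtranclp_trans)

lemma mem_Comp_iff: "v \<in> V \<Longrightarrow> x \<in> Comp s v \<longleftrightarrow> x \<in> V \<and> (adj ends s)\<^sup>*\<^sup>* v x"
  unfolding comp_of_def conn_rel_def by auto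

lemma Comp_in_Comps: "v \<in> V \<Longrightarrow> Comp s v \<in> Comps s"
  unfolding comps_def comp_of_def by (rule quotientI)

lemma Comp_eq:
  assumes "C \<in> Comps s" "v \<in> C"
  shows "Comp s v = C"
proof -
  obtain a where a: "C = conn_rel V ends s `` {a}"
    using assms(1) unfolding comps_def by (rule quotientE)
  with assms(2) have "(a, v) \<in> conn_rel V ends s"
    by simp
  then show ?thesis
    unfolding comp_of_def a using equiv_class_eq[OF equiv_conn_rel] by simp
qed

lemma Comps_subset_V: "C \<in> Comps s \<Longrightarrow> C \<subseteq> V"
  unfolding comps_def using equiv_conn_rel by (metis in_quotient_imp_subset)

lemma Comps_nonempty: "C \<in> Comps s \<Longrightarrow> C \<noteq> {}"
  unfolding comps_def using equiv_conn_rel by (metis in_quotient_imp_non_empty)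

lemma Comps_eq_if_subset:
  assumes "C \<in> Comps s" "D \<in> Comps s" "C \<subseteq> D"
  shows "C = D"
proof -
  obtain v where "v \<in> C"
    using Comps_nonempty[OF assms(1)] by blast
  then show ?thesis
    using Comp_eq assms by (metis subsetD)
qed

lemma Comps_eq_image: "Comps s = Comp s ` V"
  unfolding comps_def comp_of_def quotient_def by auto

lemma finite_Comps: "finite (Comps s)"
  unfolding Comps_eq_image using finite_V by simp

lemma card_Comps_le: "card (Comps s) \<le> card V"
  unfolding Comps_eq_image using card_image_le[OF finite_V] .

lemma Comp_insert:
  assumes e: "e \<in> E" and x: "x \<in> V"
  shows "Comp (insert e s) x = (if x \<in> Comp s (fst (ends e)) \<union> Comp s (snd (ends e))
      then Comp s (fst (ends e)) \<union> Comp s (snd (ends e)) else Comp s x)"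
proof -
  obtain u w where uw: "ends e = (u, w)" by fastforce
  have V: "u \<in> V" "w \<in> V"
    using ends_in_V[OF e] uw by auto
  let ?P = "(adj ends s)\<^sup>*\<^sup>*"
  note Cx = mem_Comp_iff[OF x, where s = s]
    and Cu = mem_Comp_iff[OF V(1), where s = s] and Cw = mem_Comp_iff[OF V(2), where s = s]
  have new: "y \<in> Comp (insert e s) x \<longleftrightarrow>
      y \<in> V \<and> (?P x y \<or> ?P x u \<and> ?P w y \<or> ?P x w \<and> ?P u y)" for y
    unfolding mem_Comp_iff[OF x] adj_rtranclp_insert[where ends = ends and e = e and s = s, OF uw] ..
  show ?thesis
  proof (cases "x \<in> Comp s u \<union> Comp s w")
    case True
    then have "?P u x \<or> ?P w x"
      using x by (simp add: Cu Cw)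
    then have merged: "?P x y \<or> ?P x u \<and> ?P w y \<or> ?P x w \<and> ?P u y \<longleftrightarrow> ?P u y \<or> ?P w y"
      for y
    proof
      assume ux: "?P u x"
      note xu = adj_rtranclp_sym[OF ux]
      show ?thesis
        using xu rtranclp_trans[OF ux, of y] rtranclp_trans[OF xu, of y] by blast
    next
      assume wx: "?P w x"
      note xw = adj_rtranclp_sym[OF wx]
      show ?thesis
        using xw rtranclp_trans[OF wx, of y] rtranclp_trans[OF xw, of y] by blast
    qed
    have "Comp (insert e s) x = Comp s u \<union> Comp s w"
      unfolding set_eq_iff new Cu Cw Un_iff using merged by blast
    with True uw show ?thesis
      by simp
  next
    case False
    then have "\<not> ?P x u" "\<not> ?P x w"
      using x adj_rtranclp_sym[of ends s x u] adj_rtranclp_sym[of ends s x w] by (auto simp: Cu Cw)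
    then have "Comp (insert e s) x = Comp s x"
      unfolding set_eq_iff new Cx by blast
    with False uw show ?thesis
      by simp
  qed
qed

definition lift :: "'e set \<Rightarrow> 'v set \<Rightarrow> 'v set" where
  "lift t C = Comp t (SOME v. v \<in> C)"

lemma
  assumes "s \<subseteq> t" "C \<in> Comps s"
  shows lift_in_Comps: "lift t C \<in> Comps t"
    and subset_lift: "C \<subseteq> lift t C"
proof -
  define v where "v = (SOME v. v \<in> C)"
  have "v \<in> C"
    unfolding v_def using Comps_nonempty[OF assms(2)] by (simp add: some_in_eq)
  then have v: "v \<in> V"
    using Comps_subset_V[OF assms(2)] by auto
  show "lift t C \<in> Comps t"
    unfolding lift_def v_def[symmetric] using Comp_in_Comps[OF v] .
  show "C \<subseteq> lift t C"
  proof
    fix x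
    assume "x \<in> C"
    then have "x \<in> Comp s v"
      using Comp_eq[OF assms(2) \<open>v \<in> C\<close>] by simp
    then show "x \<in> lift t C"
      unfolding lift_def v_def[symmetric] mem_Comp_iff[OF v]
      using adj_rtranclp_mono[OF assms(1), of ends] by blast
  qed
qed

lemma lift_unique:
  assumes "s \<subseteq> t" "C \<in> Comps s" "D \<in> Comps t" "C \<subseteq> D"
  shows "lift t C = D"
proof -
  obtain v where v: "v \<in> C"
    using Comps_nonempty[OF assms(2)] by blast
  have "Comp t v = D"
    by (rule Comp_eq[OF assms(3)]) (use v assms(4) in blast)
  moreover have "Comp t v = lift t C"
    by (rule Comp_eq[OF lift_in_Comps[OF assms(1,2)]]) (use v subset_lift[OF assms(1,2)] in blast)
  ultimately show ?thesis
    by simp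
qed

lemma lift_lift:
  assumes "s \<subseteq> t" "t \<subseteq> u" "C \<in> Comps s"
  shows "lift u (lift t C) = lift u C"
proof -
  have "lift t C \<in> Comps t" "C \<subseteq> lift t C"
    using lift_in_Comps subset_lift assms(1,3) by blast+
  then have "lift u (lift t C) \<in> Comps u" "C \<subseteq> lift u (lift t C)"
    using lift_in_Comps[OF assms(2)] subset_lift[OF assms(2)] by blast+
  moreover have "s \<subseteq> u"
    using assms(1,2) by (rule subset_trans)
  ultimately show ?thesis
    using lift_unique[OF _ assms(3)] by metis
qed

lemma lift_insert:
  assumes e: "e \<in> E" and C: "C \<in> Comps s"
  shows "lift (insert e s) C = (if C = Comp s (fst (ends e)) \<or> C = Comp s (snd (ends e))
     then Comp s (fst (ends e)) \<union> Comp s (snd (ends e)) else C)"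
proof -
  define v where "v = (SOME v. v \<in> C)"
  have v: "v \<in> C"
    unfolding v_def using Comps_nonempty[OF C] by (simp add: some_in_eq)
  then have "v \<in> V"
    using Comps_subset_V[OF C] by auto
  have "Comp s v = C"
    by (rule Comp_eq[OF C v])
  have same: "v \<in> Comp s u \<longleftrightarrow> C = Comp s u" if "u \<in> V" for u
  proof
    assume "v \<in> Comp s u"
    then show "C = Comp s u"
      using Comp_eq[OF Comp_in_Comps[OF that]] \<open>Comp s v = C\<close> by simp
  qed (use v in simp)
  show ?thesis
    unfolding lift_def v_def[symmetric] Comp_insert[OF e \<open>v \<in> V\<close>] \<open>Comp s v = C\<close>
    using same ends_in_V[OF e] by simp
qed

text \<open>
  The state reached from \<open>(s, X)\<close> by adding the edges of \<open>t - s\<close> all at once: each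
  \<open>x\<close>-coloured component is replaced by the component of \<open>[G : t]\<close> containing it, and
  the result is the zero chain (\<open>None\<close>) if two of them end up in the same component.
\<close>

definition transport :: "'v set set \<Rightarrow> 'e set \<Rightarrow> ('v, 'e) state option" where
  "transport X t = (if inj_on (lift t) X then Some (t, lift t ` X) else None)"

lemma transport_SomeD:
  assumes "s \<subseteq> t" "X \<subseteq> Comps s" "transport X t = Some T"
  shows "fst T = t" "snd T \<subseteq> Comps t" "card (snd T) = card X"
proof -
  have "inj_on (lift t) X" "T = (t, lift t ` X)"
    using assms(3) by (auto simp: transport_def split: if_splits)
  then show "fst T = t" "snd T \<subseteq> Comps t" "card (snd T) = card X"
    using lift_in_Comps[OF assms(1)] assms(2) by (auto simp: card_image)
qed

lemma transport_transport:
  assumes "s \<subseteq> t" "t \<subseteq> u" "X \<subseteq> Comps s"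
  shows "Option.bind (transport X t) (\<lambda>T. transport (snd T) u) = transport X u"
proof -
  have eq: "inj_on (lift u \<circ> lift t) X \<longleftrightarrow> inj_on (lift u) X" "lift u ` lift t ` X = lift u ` X"
    using lift_lift[OF assms(1,2)] assms(3) by (auto intro!: inj_on_cong image_cong simp: image_image)
  show ?thesis
  proof (cases "inj_on (lift t) X")
    case True
    then show ?thesis
      using eq comp_inj_on_iff[OF True, of "lift u"] by (simp add: transport_def)
  next
    case False
    then show ?thesis
      using eq inj_on_imageI2 by (fastforce simp: transport_def)
  qed
qed

lemma next_state_eq_transport:
  assumes e: "e \<in> E" and X: "X \<subseteq> Comps s"
  shows "next_state V ends (s, X) e = transport X (insert e s)"
proof -
  define C1 where "C1 = Comp s (fst (ends e))"
  define C2 where "C2 = Comp s (snd (ends e))"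
  define t where "t = insert e s"
  have C12: "C1 \<in> Comps s" "C2 \<in> Comps s"
    unfolding C1_def C2_def using Comp_in_Comps ends_in_V[OF e] by auto
  have lift_t: "lift t C = (if C = C1 \<or> C = C2 then C1 \<union> C2 else C)" if "C \<in> X" for C
    unfolding t_def C1_def C2_def using lift_insert[OF e] that X by blast
  have next_state: "next_state V ends (s, X) e = (if C1 = C2 then Some (t, X)
      else if C1 \<in> X \<and> C2 \<in> X then None
      else Some (t, (X - {C1, C2}) \<union> (if C1 \<in> X \<or> C2 \<in> X then {C1 \<union> C2} else {})))"
    unfolding next_state_def Let_def C1_def C2_def t_def by simp
  consider "C1 = C2" | "C1 \<noteq> C2" "C1 \<in> X" "C2 \<in> X" | "C1 \<noteq> C2" "C1 \<notin> X \<or> C2 \<notin> X"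
    by blast
  then show ?thesis
  proof cases
    case 1
    then have "inj_on (lift t) X" "lift t ` X = X"
      using lift_t by (auto simp: inj_on_def)
    then show ?thesis
      unfolding next_state transport_def t_def[symmetric] using 1 by simp
  next
    case 2
    then have "\<not> inj_on (lift t) X"
      using lift_t unfolding inj_on_def by metis
    then show ?thesis
      unfolding next_state transport_def t_def[symmetric] using 2 by simp
  next
    case 3
    have other: "C \<noteq> C1 \<union> C2" if "C \<in> X" "C \<noteq> C1" "C \<noteq> C2" for C
      using Comps_eq_if_subset[OF C12(1)] X that by blast
    have "inj_on (lift t) X"
      using 3 other by (auto simp: inj_on_def lift_t)
    moreover have "lift t ` X = (X - {C1, C2}) \<union> (if C1 \<in> X \<or> C2 \<in> X then {C1 \<union> C2} else {})"
      using lift_t by (auto simp: image_iff)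
    ultimately show ?thesis
      unfolding next_state transport_def t_def[symmetric] using 3 by simp
  qed
qed

abbreviation States :: "('v, 'e) state set" where
  "States \<equiv> all_states V E ends"

lemma finite_States: "finite States"
proof (rule finite_subset)
  show "States \<subseteq> Pow E \<times> Pow (Pow V)"
    unfolding all_states_def using Comps_subset_V by blast
qed (use finite_E finite_V in auto)

lemma states_subset_States: "states V E ends i j \<subseteq> States"
  unfolding states_def all_states_def by auto

lemma next_state_SomeD:
  assumes S: "S \<in> States" and e: "e \<in> E" and T: "next_state V ends S e = Some T"
  shows "T \<in> States" "fst T = insert e (fst S)" "card (snd T) = card (snd S)"
proof -
  obtain s X where SX: "S = (s, X)" "s \<subseteq> E" "X \<subseteq> Comps s"
    using S unfolding all_states_def by auto
  have "transport X (insert e s) = Some T"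
    using T next_state_eq_transport[OF e SX(3)] SX(1) by simp
  note T' = transport_SomeD[OF subset_insertI SX(3) this]
  show "fst T = insert e (fst S)" "card (snd T) = card (snd S)"
    using T' SX(1) by simp_all
  show "T \<in> States"
    using T' SX e unfolding all_states_def by (cases T) auto
qed

lemma next_state_in_states:
  assumes S: "S \<in> states V E ends i j" and e: "e \<in> E - fst S"
    and T: "next_state V ends S e = Some T"
  shows "T \<in> states V E ends (Suc i) j"
proof -
  note T' = next_state_SomeD[OF subsetD[OF states_subset_States S] _ T]
  have "finite (fst S)"
    using S finite_E finite_subset unfolding states_def by auto
  then show ?thesis
    using T' e S unfolding states_def all_states_def by auto
qed

lemma next_state_next_state:
  assumes "(s, X) \<in> States" "e \<in> E" "f \<in> E"
  shows "Option.bind (next_state V ends (s, X) e) (\<lambda>T. next_state V ends T f) =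
    transport X (insert f (insert e s))"
proof -
  have X: "X \<subseteq> Comps s"
    using assms(1) unfolding all_states_def by auto
  have "Option.bind (transport X (insert e s)) (\<lambda>T. next_state V ends T f) =
      Option.bind (transport X (insert e s)) (\<lambda>T. transport (snd T) (insert f (insert e s)))"
  proof (cases "transport X (insert e s)")
    case (Some T)
    then have "fst T = insert e s" "snd T \<subseteq> Comps (insert e s)"
      using transport_SomeD[OF subset_insertI X] by auto
    then show ?thesis
      using Some next_state_eq_transport[OF assms(3)] by (cases T) simp
  qed simp
  then show ?thesis
    using next_state_eq_transport[OF assms(2) X]
      transport_transport[OF subset_insertI subset_insertI X] by simp
qed

end

section \<open>The differential squares to zero\<close>

locale ordered_graph = finite_graph V E ends
  for V :: "'v set" and E :: "'e set" and ends :: "'e \<Rightarrow> 'v \<times> 'v" +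
  fixes es :: "'e list"
  assumes edge_ordering: "edge_ordering E es"
begin

lemma distinct_es: "distinct es" and set_es: "set es = E"
  using edge_ordering unfolding edge_ordering_def by auto

abbreviation edge_sign :: "'e set \<Rightarrow> 'e \<Rightarrow> int" where
  "edge_sign s e \<equiv> (-1) ^ n_before es s e"

lemma sum_dcoef_mult:
  assumes "S \<in> States"
  shows "(\<Sum>T\<in>States. dcoef V E ends es S T * g T) =
    (\<Sum>e\<in>E - fst S. case next_state V ends S e of None \<Rightarrow> 0 | Some T \<Rightarrow> edge_sign (fst S) e * g T)"
proof -
  have "(\<Sum>T\<in>States. dcoef V E ends es S T * g T) =
      (\<Sum>e\<in>E - fst S. \<Sum>T\<in>States. if next_state V ends S e = Some T then edge_sign (fst S) e * g T else 0)"
    unfolding dcoef_def sum_distrib_right by (subst sum.swap) (intro sum.cong refl, simp)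
  also have "\<dots> = (\<Sum>e\<in>E - fst S.
      case next_state V ends S e of None \<Rightarrow> 0 | Some T \<Rightarrow> edge_sign (fst S) e * g T)"
  proof (intro sum.cong refl)
    fix e
    assume "e \<in> E - fst S"
    then show "(\<Sum>T\<in>States. if next_state V ends S e = Some T then edge_sign (fst S) e * g T else 0) =
        (case next_state V ends S e of None \<Rightarrow> 0 | Some T \<Rightarrow> edge_sign (fst S) e * g T)"
      using next_state_SomeD(1)[OF assms] finite_States
      by (cases "next_state V ends S e") (auto simp: sum.delta)
  qed
  finally show ?thesis .
qed

lemma sum_dcoef_dcoef:
  assumes S: "S \<in> States"
  shows "(\<Sum>T\<in>States. dcoef V E ends es S T * dcoef V E ends es T U) = 0"
proof -
  obtain s X where SX: "S = (s, X)"
    by fastforce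
  note S' = S[unfolded SX]
  have "finite s"
    using S' finite_E finite_subset unfolding all_states_def by auto
  define g where "g e f = (if transport X (insert f (insert e s)) = Some U
      then edge_sign s e * edge_sign (insert e s) f else 0)" for e f
  have "(\<Sum>T\<in>States. dcoef V E ends es S T * dcoef V E ends es T U) =
      (\<Sum>e\<in>E - s. \<Sum>f\<in>E - s - {e}. g e f)"
    unfolding sum_dcoef_mult[OF S] unfolding SX fst_conv
  proof (intro sum.cong refl)
    fix e
    assume e: "e \<in> E - s"
    then have two_steps: "Option.bind (next_state V ends (s, X) e) (\<lambda>T. next_state V ends T f) =
        transport X (insert f (insert e s))" if "f \<in> E" for f
      using next_state_next_state[OF S' _ that] by simp
    show "(case next_state V ends (s, X) e of None \<Rightarrow> 0
        | Some T \<Rightarrow> edge_sign s e * dcoef V E ends es T U) = (\<Sum>f\<in>E - s - {e}. g e f)"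
    proof (cases "next_state V ends (s, X) e")
      case None
      then show ?thesis
        using two_steps by (simp add: g_def)
    next
      case (Some T)
      then have "fst T = insert e s"
        using next_state_SomeD(2)[OF S'] e by auto
      then show ?thesis
        unfolding Some option.case dcoef_def sum_distrib_left
        using two_steps Some by (intro sum.cong) (auto simp: g_def)
    qed
  qed
  also have "\<dots> = 0"
  proof (rule sum_offdiagonal_antisym_eq_zero)
    fix e f
    assume "e \<in> E - s" "f \<in> E - s" "e \<noteq> f"
    then show "g f e = - g e f"
      using n_before_insert_sign_swap[OF distinct_es, of e f s] set_es \<open>finite s\<close>
      by (simp add: g_def insert_commute)
  qed (use finite_E in simp)
  finally show ?thesis .
qed

lemma dmap_dmap: "dmap V E ends es (dmap V E ends es f) = 0"
proof
  fix U
  have "dmap V E ends es (dmap V E ends es f) U = (\<Sum>T\<in>States.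
      (\<Sum>S\<in>States. f S * of_int (dcoef V E ends es S T)) * of_int (dcoef V E ends es T U))"
    unfolding dmap_def ..
  also have "\<dots> = (\<Sum>T\<in>States. \<Sum>S\<in>States.
      f S * of_int (dcoef V E ends es S T * dcoef V E ends es T U))"
    by (simp add: sum_distrib_right mult.assoc)
  also have "\<dots> = (\<Sum>S\<in>States. f S *
      of_int (\<Sum>T\<in>States. dcoef V E ends es S T * dcoef V E ends es T U))"
    by (subst sum.swap) (simp add: sum_distrib_left)
  also have "\<dots> = 0"
    using sum_dcoef_dcoef by simp
  finally show "dmap V E ends es (dmap V E ends es f) U = 0 U"
    by simp
qed

lemma dmap_chains:
  assumes f: "f \<in> chains V E ends i j"
  shows "dmap V E ends es f \<in> chains V E ends (Suc i) j"
  unfolding chains_def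
proof (intro CollectI allI impI)
  fix T
  assume "dmap V E ends es f T \<noteq> 0"
  then obtain S where S: "S \<in> States" "f S \<noteq> 0" "dcoef V E ends es S T \<noteq> 0"
    unfolding dmap_def by (auto elim: sum.not_neutral_contains_not_neutral)
  then have "S \<in> states V E ends i j"
    using f unfolding chains_def by blast
  moreover obtain e where "e \<in> E - fst S" "next_state V ends S e = Some T"
    using S(3) unfolding dcoef_def by (auto elim: sum.not_neutral_contains_not_neutral split: if_splits)
  ultimately show "T \<in> states V E ends (Suc i) j"
    by (rule next_state_in_states)
qed

end

lemma dmap_linear: "Vector_Spaces.linear qscale qscale (dmap V E ends es)"
  unfolding Vector_Spaces.linear_iff
  by (auto simp: vector_space_qscale dmap_def qscale_def fun_eq_iff algebra_simps
      sum.distrib sum_distrib_left)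

section \<open>Chain groups and the Euler characteristic\<close>

sublocale finite_graph \<subseteq> Q: vector_space "qscale :: rat \<Rightarrow> (('v, 'e) state \<Rightarrow> rat) \<Rightarrow> _"
  by (rule vector_space_qscale)

context finite_graph
begin

abbreviation unit_chain :: "('v, 'e) state \<Rightarrow> ('v, 'e) state \<Rightarrow> rat" where
  "unit_chain S \<equiv> \<lambda>T. of_bool (T = S)"

abbreviation unit_chains :: "nat \<Rightarrow> nat \<Rightarrow> (('v, 'e) state \<Rightarrow> rat) set" where
  "unit_chains i j \<equiv> unit_chain ` states V E ends i j"

lemma finite_states: "finite (states V E ends i j)"
  using finite_subset[OF states_subset_States finite_States] .

lemma inj_unit_chain: "inj unit_chain"
proof (rule injI)
  fix S S'
  assume "unit_chain S = unit_chain S'"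
  from fun_cong[OF this, of S] show "S = S'"
    by simp
qed

lemma chains_subset_span_unit_chains: "chains V E ends i j \<subseteq> Q.span (unit_chains i j)"
proof
  fix f
  assume f: "f \<in> chains V E ends i j"
  have "f = (\<Sum>S\<in>states V E ends i j. qscale (f S) (unit_chain S))"
    using f finite_states[of i j]
    by (auto simp: fun_eq_iff sum_fun_apply qscale_def chains_def Int_insert_right)
  also have "\<dots> \<in> Q.span (unit_chains i j)"
    by (intro Q.span_sum Q.span_scale Q.span_base) auto
  finally show "f \<in> Q.span (unit_chains i j)" .
qed

lemma independent_unit_chains: "Q.independent (unit_chains i j)"
proof (rule Q.independent_if_scalars_zero)
  show "finite (unit_chains i j)"
    using finite_states by simp
  fix c x
  assume sum0: "(\<Sum>x\<in>unit_chains i j. qscale (c x) x) = 0" and "x \<in> unit_chains i j"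
  then obtain S where S: "S \<in> states V E ends i j" "x = unit_chain S"
    by auto
  have "0 = (\<Sum>S'\<in>states V E ends i j. c (unit_chain S') * unit_chain S' S)"
    using fun_cong[OF sum0, of S] inj_on_subset[OF inj_unit_chain]
    by (simp add: sum.reindex sum_fun_apply qscale_def)
  also have "\<dots> = c x"
    using S finite_states by simp
  finally show "c x = 0" ..
qed

lemma unit_chains_subset_chains: "unit_chains i j \<subseteq> chains V E ends i j"
  unfolding chains_def by auto

lemma qdim_chains: "qdim (chains V E ends i j) = card (states V E ends i j)"
proof -
  have "card (unit_chains i j) = Q.dim (chains V E ends i j)"
    using Q.basis_card_eq_dim[OF unit_chains_subset_chains chains_subset_span_unit_chains
        independent_unit_chains] .
  then show ?thesis
    unfolding qdim_def using card_image inj_on_subset[OF inj_unit_chain] by (metis subset_UNIV)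
qed

lemma subspace_chains: "Q.subspace (chains V E ends i j)"
  unfolding Q.subspace_def chains_def qscale_def by auto (metis add.right_neutral)

lemma sum_signed_states:
  fixes q :: real
  shows "(\<Sum>i=0..card E. \<Sum>j=0..card V. (-1) ^ i * q ^ j * real (card (states V E ends i j))) =
    (\<Sum>s\<in>Pow E. (-1) ^ card s * (1 + q) ^ card (Comps s))"
proof -
  define w where "w S = (-1) ^ card (fst S) * q ^ card (snd S)" for S :: "('v, 'e) state"
  define bideg where "bideg S = (card (fst S), card (snd S))" for S :: "('v, 'e) state"
  have "bideg ` States \<subseteq> {0..card E} \<times> {0..card V}"
  proof (clarsimp simp: bideg_def all_states_def)
    fix s X
    assume "s \<subseteq> E" "X \<subseteq> Comps s"
    then show "card s \<le> card E \<and> card X \<le> card V"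
      using card_mono[OF finite_E \<open>s \<subseteq> E\<close>] card_mono[OF finite_Comps \<open>X \<subseteq> Comps s\<close>]
        card_Comps_le[of s] by linarith
  qed
  then have "(\<Sum>S\<in>States. w S) =
      (\<Sum>p\<in>{0..card E} \<times> {0..card V}. \<Sum>S\<in>{S \<in> States. bideg S = p}. w S)"
    by (intro sum.group[symmetric, OF finite_States]) simp_all
  also have "\<dots> = (\<Sum>(i, j)\<in>{0..card E} \<times> {0..card V}.
      (-1) ^ i * q ^ j * real (card (states V E ends i j)))"
  proof (intro sum.cong refl, clarify)
    fix i j
    have "{S \<in> States. bideg S = (i, j)} = states V E ends i j"
      unfolding bideg_def all_states_def states_def by auto
    moreover have "(\<Sum>S\<in>states V E ends i j. w S) = (\<Sum>S\<in>states V E ends i j. (-1) ^ i * q ^ j)"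
      by (intro sum.cong) (auto simp: w_def states_def)
    ultimately show "(\<Sum>S\<in>{S \<in> States. bideg S = (i, j)}. w S) =
        (-1) ^ i * q ^ j * real (card (states V E ends i j))"
      by simp
  qed
  finally have "(\<Sum>S\<in>States. w S) =
      (\<Sum>i=0..card E. \<Sum>j=0..card V. (-1) ^ i * q ^ j * real (card (states V E ends i j)))"
    by (simp add: sum.cartesian_product)
  moreover have "States = Sigma (Pow E) (\<lambda>s. Pow (Comps s))"
    unfolding all_states_def by auto
  then have "(\<Sum>S\<in>States. w S) = (\<Sum>s\<in>Pow E. \<Sum>X\<in>Pow (Comps s). w (s, X))"
    by (simp add: sum.Sigma finite_E finite_Comps split_beta)
  ultimately show ?thesis
    by (simp add: w_def sum_distrib_left[symmetric] sum_power_card_Pow finite_Comps)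
qed

end

context ordered_graph
begin

lemma cycles_subset_chains: "cycles V E ends es i j \<subseteq> chains V E ends i j"
  unfolding cycles_def by auto

lemma boundaries_subset_cycles: "boundaries V E ends es i j \<subseteq> cycles V E ends es i j"
proof (cases i)
  case 0
  have "dmap V E ends es 0 = 0"
    unfolding dmap_def by (simp add: fun_eq_iff)
  then show ?thesis
    unfolding boundaries_def cycles_def chains_def using 0 by simp
next
  case (Suc k)
  then show ?thesis
    unfolding boundaries_def cycles_def using dmap_chains dmap_dmap by auto
qed

lemma qdim_chains_eq_cycles_plus_boundaries:
  "qdim (chains V E ends i j) = qdim (cycles V E ends es i j) + qdim (boundaries V E ends es (Suc i) j)"
  unfolding qdim_def cycles_def boundaries_def
  using Q.rank_nullity[OF subspace_chains chains_subset_span_unit_chains _ dmap_linear] finite_states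
  by simp

lemma qdim_boundaries_le_cycles:
  "qdim (boundaries V E ends es i j) \<le> qdim (cycles V E ends es i j)"
  unfolding qdim_def using finite_states
  by (intro Q.dim_subset_of_finite_span[OF boundaries_subset_cycles
        subset_trans[OF cycles_subset_chains chains_subset_span_unit_chains]]) simp

lemma qdim_boundaries_eq_0:
  assumes "i = 0 \<or> card E < i"
  shows "qdim (boundaries V E ends es i j) = 0"
proof -
  have "boundaries V E ends es i j \<subseteq> Q.span {}"
  proof (cases "i = 0")
    case True
    then show ?thesis
      by (simp add: boundaries_def)
  next
    case False
    then have "states V E ends i j = {}"
      using assms by (auto simp: states_def dest: card_mono[OF finite_E])
    then show ?thesis
      using boundaries_subset_cycles cycles_subset_chains chains_subset_span_unit_chains
      by (metis image_empty subset_trans)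
  qed
  then show ?thesis
    unfolding qdim_def using Q.dim_le_card[of _ "{}"] by simp
qed

lemma euler_characteristic:
  "(\<Sum>i=0..card E. (-1) ^ i * real (hrank V E ends es i j)) =
    (\<Sum>i=0..card E. (-1) ^ i * real (card (states V E ends i j)))"
proof -
  define b where "b i = real (qdim (boundaries V E ends es i j))" for i
  have "real (card (states V E ends i j)) - real (hrank V E ends es i j) = b i + b (Suc i)" for i
    using qdim_chains_eq_cycles_plus_boundaries[of i j] qdim_boundaries_le_cycles[of i j]
    unfolding hrank_def b_def qdim_chains by (simp add: of_nat_diff)
  then have "(\<Sum>i=0..card E. (-1) ^ i * real (card (states V E ends i j))) -
      (\<Sum>i=0..card E. (-1) ^ i * real (hrank V E ends es i j)) =
      (\<Sum>i=0..card E. (-1) ^ i * (b i + b (Suc i)))"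
    by (simp add: sum_subtractf[symmetric] right_diff_distrib[symmetric])
  also have "\<dots> = 0"
    unfolding sum_alternating_telescope unfolding b_def by (simp add: qdim_boundaries_eq_0)
  finally show ?thesis
    by simp
qed

lemma R_G_at_minus_one:
  "R_G V E ends es (-1) q = (\<Sum>s\<in>Pow E. (-1) ^ card s * (1 + q) ^ card (Comps s))"
proof -
  have "R_G V E ends es (-1) q =
      (\<Sum>j=0..card V. q ^ j * (\<Sum>i=0..card E. (-1) ^ i * real (hrank V E ends es i j)))"
    unfolding R_G_def by (subst sum.swap) (simp add: sum_distrib_left mult_ac)
  also have "\<dots> = (\<Sum>j=0..card V. q ^ j * (\<Sum>i=0..card E. (-1) ^ i * real (card (states V E ends i j))))"
    by (simp add: euler_characteristic)
  also have "\<dots> = (\<Sum>i=0..card E. \<Sum>j=0..card V. (-1) ^ i * q ^ j * real (card (states V E ends i j)))"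
    by (subst sum.swap) (simp add: sum_distrib_left mult_ac)
  also have "\<dots> = (\<Sum>s\<in>Pow E. (-1) ^ card s * (1 + q) ^ card (Comps s))"
    by (rule sum_signed_states)
  finally show ?thesis .
qed

end

section \<open>Whitney's expansion of the chromatic polynomial\<close>

context finite_graph
begin

lemma Comp_fst_ends_eq:
  assumes "e \<in> s" "s \<subseteq> E"
  shows "Comp s (fst (ends e)) = Comp s (snd (ends e))"
proof -
  obtain u w where uw: "ends e = (u, w)"
    by fastforce
  have V: "u \<in> V" "w \<in> V"
    using ends_in_V[of e] assms uw by auto
  have "adj ends s u w"
    unfolding adj_def using assms(1) uw by blast
  then have "w \<in> Comp s u"
    unfolding mem_Comp_iff[OF V(1)] using V(2) by simp
  then have "Comp s w = Comp s u"
    by (rule Comp_eq[OF Comp_in_Comps[OF V(1)]])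
  then show ?thesis
    using uw by simp
qed

lemma constant_on_Comp:
  assumes "\<forall>e\<in>s. c (fst (ends e)) = c (snd (ends e))" "v \<in> V" "x \<in> Comp s v"
  shows "c x = c v"
proof -
  have "(adj ends s)\<^sup>*\<^sup>* v x"
    using assms(2,3) mem_Comp_iff by blast
  then show ?thesis
  proof (induction rule: rtranclp_induct)
    case (step y z)
    then obtain e where "e \<in> s" "ends e = (y, z) \<or> ends e = (z, y)"
      unfolding adj_def by auto
    then show ?case
      using assms(1) step.IH by (metis fst_conv snd_conv)
  qed simp
qed

lemma inj_on_colorings_of_Comps: "inj_on (\<lambda>h. \<lambda>v\<in>V. h (Comp s v)) (Comps s \<rightarrow>\<^sub>E A)"
proof (rule inj_onI)
  fix h h'
  assume h: "h \<in> Comps s \<rightarrow>\<^sub>E A" "h' \<in> Comps s \<rightarrow>\<^sub>E A"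
    and eq: "(\<lambda>v\<in>V. h (Comp s v)) = (\<lambda>v\<in>V. h' (Comp s v))"
  show "h = h'"
  proof (rule PiE_ext[OF h])
    fix C
    assume C: "C \<in> Comps s"
    then obtain v where "v \<in> C"
      using Comps_nonempty by blast
    then have "v \<in> V" "Comp s v = C"
      using C Comps_subset_V Comp_eq by auto
    then show "h C = h' C"
      using fun_cong[OF eq, of v] by simp
  qed
qed

lemma colorings_constant_on_edges_eq_image:
  assumes "s \<subseteq> E"
  shows "{c \<in> V \<rightarrow>\<^sub>E A. \<forall>e\<in>s. c (fst (ends e)) = c (snd (ends e))} =
    (\<lambda>h. \<lambda>v\<in>V. h (Comp s v)) ` (Comps s \<rightarrow>\<^sub>E A)"
    (is "?M = ?F ` _")
proof (intro equalityI subsetI)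
  fix c
  assume "c \<in> ?M"
  then have c: "c \<in> V \<rightarrow>\<^sub>E A" "\<forall>e\<in>s. c (fst (ends e)) = c (snd (ends e))"
    by auto
  define h where "h = (\<lambda>C\<in>Comps s. c (SOME v. v \<in> C))"
  have some_in: "(SOME v. v \<in> C) \<in> C" if "C \<in> Comps s" for C
    using Comps_nonempty[OF that] by (simp add: some_in_eq)
  have "c (SOME v. v \<in> C) \<in> A" if "C \<in> Comps s" for C
    using PiE_mem[OF c(1) subsetD[OF Comps_subset_V[OF that] some_in[OF that]]] .
  then have h: "h \<in> Comps s \<rightarrow>\<^sub>E A"
    unfolding h_def by simp
  have "?F h = c"
  proof
    fix v
    show "?F h v = c v"
    proof (cases "v \<in> V")
      case True
      have "?F h v = c (SOME w. w \<in> Comp s v)"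
        using True Comp_in_Comps[OF True] by (simp add: h_def)
      also have "\<dots> = c v"
        by (rule constant_on_Comp[OF c(2) True some_in[OF Comp_in_Comps[OF True]]])
      finally show ?thesis .
    next
      case False
      then show ?thesis
        using PiE_arb[OF c(1) False] by simp
    qed
  qed
  then show "c \<in> ?F ` (Comps s \<rightarrow>\<^sub>E A)"
    using h by blast
next
  fix c
  assume "c \<in> ?F ` (Comps s \<rightarrow>\<^sub>E A)"
  then obtain h where h: "h \<in> Comps s \<rightarrow>\<^sub>E A" "c = ?F h"
    by blast
  have "c \<in> V \<rightarrow>\<^sub>E A"
    unfolding h(2) restrict_PiE_iff using PiE_mem[OF h(1) Comp_in_Comps] by blast
  moreover have "c (fst (ends e)) = c (snd (ends e))" if "e \<in> s" for e
    using Comp_fst_ends_eq[OF that assms] ends_in_V[of e] that assms by (auto simp: h(2))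
  ultimately show "c \<in> ?M"
    by blast
qed

lemma card_colorings_constant_on_edges:
  assumes "s \<subseteq> E"
  shows "card {c \<in> V \<rightarrow>\<^sub>E {..<n}. \<forall>e\<in>s. c (fst (ends e)) = c (snd (ends e))} = n ^ card (Comps s)"
  unfolding colorings_constant_on_edges_eq_image[OF assms]
  by (simp add: card_image[OF inj_on_colorings_of_Comps] card_PiE finite_Comps)

lemma card_proper_colorings:
  "int (card (proper_colorings V E ends n)) = (\<Sum>s\<in>Pow E. (-1) ^ card s * int n ^ card (Comps s))"
proof -
  define CS where "CS = V \<rightarrow>\<^sub>E {..<n}"
  define monochromatic where "monochromatic e c \<longleftrightarrow> c (fst (ends e)) = c (snd (ends e))" for e and c :: "'v \<Rightarrow> nat"
  have "finite CS"
    unfolding CS_def using finite_V by (simp add: finite_PiE)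
  have "int (card (proper_colorings V E ends n)) = (\<Sum>c\<in>CS. of_bool (\<forall>e\<in>E. \<not> monochromatic e c))"
    using \<open>finite CS\<close> unfolding proper_colorings_def CS_def monochromatic_def by (simp add: Collect_conj_eq)
  also have "\<dots> = (\<Sum>c\<in>CS. \<Sum>s\<in>Pow E. (-1) ^ card s * of_bool (\<forall>e\<in>s. monochromatic e c))"
    by (intro sum.cong refl) (rule of_bool_all_not_eq_sum_Pow[OF finite_E])
  also have "\<dots> = (\<Sum>s\<in>Pow E. (-1) ^ card s * (\<Sum>c\<in>CS. of_bool (\<forall>e\<in>s. monochromatic e c)))"
    by (subst sum.swap) (simp add: sum_distrib_left)
  also have "\<dots> = (\<Sum>s\<in>Pow E. (-1) ^ card s * int n ^ card (Comps s))"
  proof (intro sum.cong refl)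
    fix s
    assume "s \<in> Pow E"
    then have "card (CS \<inter> {c. \<forall>e\<in>s. monochromatic e c}) = n ^ card (Comps s)"
      using card_colorings_constant_on_edges[of s n] unfolding CS_def monochromatic_def Int_def by simp
    then show "(-1) ^ card s * (\<Sum>c\<in>CS. of_bool (\<forall>e\<in>s. monochromatic e c)) =
        (-1) ^ card s * int n ^ card (Comps s)"
      using \<open>finite CS\<close> by simp
  qed
  finally show ?thesis .
qed

lemma chromatic_poly_eq: "chromatic_poly V E ends = (\<Sum>s\<in>Pow E. monom ((-1) ^ card s) (card (Comps s)))"
  (is "_ = ?p")
  unfolding chromatic_poly_def
proof (rule the_equality)
  show "\<forall>n. poly ?p (int n) = int (card (proper_colorings V E ends n))"
    by (simp add: card_proper_colorings poly_sum poly_monom)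
  fix p
  assume p: "\<forall>n. poly p (int n) = int (card (proper_colorings V E ends n))"
  show "p = ?p"
  proof (rule ccontr)
    assume "p \<noteq> ?p"
    then have "finite {x. poly (p - ?p) x = 0}"
      by (intro poly_roots_finite) simp
    moreover have "range int \<subseteq> {x. poly (p - ?p) x = 0}"
      using p by (auto simp: card_proper_colorings poly_sum poly_monom)
    ultimately show False
      using finite_subset infinite_UNIV_nat finite_imageD[of int UNIV] by auto
  qed
qed

lemma poly_chromatic_poly:
  "poly (map_poly real_of_int (chromatic_poly V E ends)) x = (\<Sum>s\<in>Pow E. (-1) ^ card s * x ^ card (Comps s))"
  by (simp add: chromatic_poly_eq map_poly_of_int_sum poly_sum map_poly_monom poly_monom)

end

section \<open>Independence of the edge ordering\<close>

locale reordered_graph = finite_graph V E ends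
  for V :: "'v set" and E :: "'e set" and ends :: "'e \<Rightarrow> 'v \<times> 'v" +
  fixes es1 es2 :: "'e list"
  assumes edge_ordering1: "edge_ordering E es1" and edge_ordering2: "edge_ordering E es2"
begin

definition inversions :: "'e set \<Rightarrow> ('e \<times> 'e) set" where
  "inversions s = {(a, b). a \<in> s \<and> b \<in> s \<and> precedes es1 a b \<and> precedes es2 b a}"

definition twist_sign :: "'e set \<Rightarrow> int" where
  "twist_sign s = (-1) ^ card (inversions s)"

lemma twist_sign_square: "twist_sign s * twist_sign s = 1"
  unfolding twist_sign_def by (simp add: power_mult_distrib[symmetric])

lemma twist_sign_insert:
  assumes "s \<subseteq> E" "e \<in> E - s"
  shows "twist_sign (insert e s) = twist_sign s * (-1) ^ (n_before es1 s e + n_before es2 s e)"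
proof -
  have "finite s"
    using assms(1) finite_E finite_subset by blast
  define P1 where "P1 = {a \<in> s. precedes es1 a e}"
  define P2 where "P2 = {a \<in> s. precedes es2 a e}"
  have swap: "precedes es e a \<longleftrightarrow> \<not> precedes es a e" if "edge_ordering E es" "a \<in> s" for es a
    using precedes_iff_not_precedes[of es e a] that assms unfolding edge_ordering_def by auto
  have inv: "inversions (insert e s) =
      inversions s \<union> (\<lambda>a. (a, e)) ` (P1 - P2) \<union> (\<lambda>b. (e, b)) ` (P2 - P1)"
    unfolding inversions_def P1_def P2_def
    using swap[OF edge_ordering1] swap[OF edge_ordering2] not_precedes_self[where xs = es1 and a = e]
      not_precedes_self[where xs = es2 and a = e] by auto
  have "inversions s \<subseteq> s \<times> s"
    unfolding inversions_def by auto
  then have "finite (inversions s)"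
    using \<open>finite s\<close> finite_subset by blast
  moreover have "finite P1" "finite P2"
    using \<open>finite s\<close> by (simp_all add: P1_def P2_def)
  moreover have "card ((\<lambda>a. (a, e)) ` (P1 - P2)) = card (P1 - P2)"
    "card ((\<lambda>b. (e, b)) ` (P2 - P1)) = card (P2 - P1)"
    by (simp_all add: card_image inj_on_def)
  moreover have "inversions s \<inter> (\<lambda>a. (a, e)) ` (P1 - P2) = {}"
    "(inversions s \<union> (\<lambda>a. (a, e)) ` (P1 - P2)) \<inter> (\<lambda>b. (e, b)) ` (P2 - P1) = {}"
    using assms(2) by (auto simp: inversions_def P1_def P2_def)
  ultimately have "card (inversions (insert e s)) = card (inversions s) + card (P1 - P2) + card (P2 - P1)"
    unfolding inv by (simp add: card_Un_disjoint)
  moreover have "card P1 + card P2 = card (P1 - P2) + card (P2 - P1) + 2 * card (P1 \<inter> P2)"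
    using card_Int_Diff[OF \<open>finite P1\<close>, of P2] card_Int_Diff[OF \<open>finite P2\<close>, of P1]
    by (simp add: Int_commute)
  moreover have "n_before es1 s e = card P1" "n_before es2 s e = card P2"
    unfolding n_before_def P1_def P2_def by simp_all
  ultimately show ?thesis
    unfolding twist_sign_def by (simp add: power_add power_mult)
qed

lemma dcoef_reorder:
  assumes "S \<in> States"
  shows "dcoef V E ends es2 S T = twist_sign (fst S) * twist_sign (fst T) * dcoef V E ends es1 S T"
  unfolding dcoef_def sum_distrib_left
proof (intro sum.cong refl)
  fix e
  assume e: "e \<in> E - fst S"
  have "fst S \<subseteq> E"
    using assms unfolding all_states_def by auto
  show "(if next_state V ends S e = Some T then (-1) ^ n_before es2 (fst S) e else 0) =
      twist_sign (fst S) * twist_sign (fst T) *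
      (if next_state V ends S e = Some T then (-1) ^ n_before es1 (fst S) e else 0)"
  proof (cases "next_state V ends S e = Some T")
    case True
    then have "twist_sign (fst T) =
        twist_sign (fst S) * (-1) ^ (n_before es1 (fst S) e + n_before es2 (fst S) e)"
      using next_state_SomeD(2)[OF assms _ True] twist_sign_insert[OF \<open>fst S \<subseteq> E\<close> e] e by simp
    then show ?thesis
      using True twist_sign_square[of "fst S"]
      by (simp add: power_add algebra_simps power_mult_distrib[symmetric])
  qed simp
qed

definition twist :: "(('v, 'e) state \<Rightarrow> rat) \<Rightarrow> ('v, 'e) state \<Rightarrow> rat" where
  "twist f = (\<lambda>S. of_int (twist_sign (fst S)) * f S)"

lemma twist_twist: "twist (twist f) = f"
  using twist_sign_square by (simp add: twist_def fun_eq_iff mult.assoc[symmetric] of_int_mult[symmetric])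

lemma inj_twist: "inj twist"
  by (metis injI twist_twist)

lemma linear_twist: "Vector_Spaces.linear qscale qscale twist"
  unfolding Vector_Spaces.linear_iff
  by (auto simp: vector_space_qscale twist_def qscale_def fun_eq_iff algebra_simps)

lemma twist_zero: "twist 0 = 0"
  by (simp add: twist_def fun_eq_iff)

lemma mem_twist_image: "f \<in> twist ` A \<longleftrightarrow> twist f \<in> A"
proof
  assume "twist f \<in> A"
  then show "f \<in> twist ` A"
    using image_eqI[of f twist "twist f"] by (simp add: twist_twist)
qed (auto simp: twist_twist)

lemma twist_in_chains: "twist f \<in> chains V E ends i j \<longleftrightarrow> f \<in> chains V E ends i j"
  by (simp add: chains_def twist_def twist_sign_def)

lemma twist_chains: "twist ` chains V E ends i j = chains V E ends i j"
  by (simp add: set_eq_iff mem_twist_image twist_in_chains)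

lemma dmap_twist: "dmap V E ends es2 (twist f) = twist (dmap V E ends es1 f)"
proof
  fix T
  have "dmap V E ends es2 (twist f) T = (\<Sum>S\<in>States. of_int (twist_sign (fst T)) *
      (of_int (twist_sign (fst S) * twist_sign (fst S)) * (f S * of_int (dcoef V E ends es1 S T))))"
    unfolding dmap_def twist_def by (intro sum.cong refl) (simp add: dcoef_reorder algebra_simps)
  also have "\<dots> = twist (dmap V E ends es1 f) T"
    by (simp add: twist_sign_square twist_def dmap_def sum_distrib_left)
  finally show "dmap V E ends es2 (twist f) T = twist (dmap V E ends es1 f) T" .
qed

lemma cycles_reorder: "cycles V E ends es2 i j = twist ` cycles V E ends es1 i j"
proof -
  have "dmap V E ends es2 f = twist (dmap V E ends es1 (twist f))" for f
    using dmap_twist[of "twist f"] by (simp add: twist_twist)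
  then have "dmap V E ends es2 f = 0 \<longleftrightarrow> dmap V E ends es1 (twist f) = 0" for f
    by (metis twist_twist twist_zero)
  then show ?thesis
    by (simp add: cycles_def set_eq_iff mem_twist_image twist_in_chains)
qed

lemma boundaries_reorder: "boundaries V E ends es2 i j = twist ` boundaries V E ends es1 i j"
proof (cases "i = 0")
  case True
  then show ?thesis
    by (simp add: boundaries_def twist_def fun_eq_iff)
next
  case False
  have "dmap V E ends es2 ` chains V E ends (i - 1) j = twist ` dmap V E ends es1 ` chains V E ends (i - 1) j"
    by (subst twist_chains[symmetric]) (simp add: image_image dmap_twist)
  then show ?thesis
    using False by (simp add: boundaries_def)
qed

lemma hrank_reorder: "hrank V E ends es2 i j = hrank V E ends es1 i j"
  unfolding hrank_def qdim_def cycles_reorder boundaries_reorder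
  using vector_space.dim_image_eq_if_inj[OF vector_space_qscale linear_twist inj_twist] by simp

lemma R_G_reorder: "R_G V E ends es1 t q = R_G V E ends es2 t q"
  unfolding R_G_def hrank_reorder ..

end

theorem mainTheorem4:
  fixes V :: "'v set" and E :: "'e set" and ends :: "'e \<Rightarrow> 'v \<times> 'v"
  assumes "fin_graph V E ends"
  shows "(\<forall>es1 es2. edge_ordering E es1 \<and> edge_ordering E es2 \<longrightarrow>
            (\<forall>t q. R_G V E ends es1 t q = R_G V E ends es2 t q)) \<and>
         (\<forall>es. edge_ordering E es \<longrightarrow>
            (\<forall>q. R_G V E ends es (-1) q =
                 poly (map_poly real_of_int (chromatic_poly V E ends)) (1 + q)))"
proof -
  interpret finite_graph V E ends
    by (rule finite_graph.intro) fact
  show ?thesis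
  proof (intro conjI allI impI)
    fix es1 es2 t q
    assume "edge_ordering E es1 \<and> edge_ordering E es2"
    then interpret reordered_graph V E ends es1 es2
      by unfold_locales auto
    show "R_G V E ends es1 t q = R_G V E ends es2 t q"
      by (rule R_G_reorder)
  next
    fix es q
    assume "edge_ordering E es"
    then interpret ordered_graph V E ends es
      by unfold_locales
    show "R_G V E ends es (-1) q = poly (map_poly real_of_int (chromatic_poly V E ends)) (1 + q)"
      unfolding R_G_at_minus_one poly_chromatic_poly ..
  qed
qed

end
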